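(* The barycentre of a simplex in a real normed linear space is a relative interior point of that simplex.
   Context: The setting is Bishop's constructive mathematics (intuitionistic logic). Vectors $v_1,\ldots,v_n$ are linearly independent if $\|\sum_i\mu_iv_i\|>0$ whenever $\sum_i|\mu_i|>0$; points $a_1,\ldots,a_{n+1}$ are affinely independent if $a_k-a_{n+1}$ ($1\le k\le n$) are linearly independent; the $n$-simplex with (affinely independent) vertices $a_1,\ldots,a_{n+1}$ is their convex hull, and its barycentre is $\frac{1}{n+1}\sum_{k=1}^{n+1}a_k$. $\mathsf{relint}(S)=\{x\in S:\exists r>0\,(B_X(x,r)\cap\mathsf{aff}(S)\subset S)\}$, with $B_X$ the open ball and $\mathsf{aff}$ the affine hull; its elements are relative interior points. *)

theory Defs
  imports "HOL-Analysis.Analysis"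
begin

definition lin_indep_c :: "nat \<Rightarrow> (nat \<Rightarrow> 'a::real_normed_vector) \<Rightarrow> bool" where
  "lin_indep_c m v \<longleftrightarrow>
     (\<forall>\<mu> :: nat \<Rightarrow> real. (\<Sum>i<m. \<bar>\<mu> i\<bar>) > 0 \<longrightarrow> norm (\<Sum>i<m. \<mu> i *\<^sub>R v i) > 0)"

definition aff_indep_c :: "nat \<Rightarrow> (nat \<Rightarrow> 'a::real_normed_vector) \<Rightarrow> bool" where
  "aff_indep_c n a \<longleftrightarrow> lin_indep_c n (\<lambda>k. a k - a n)"

definition simplex_c :: "nat \<Rightarrow> (nat \<Rightarrow> 'a::real_normed_vector) \<Rightarrow> 'a set" where
  "simplex_c n a = convex hull (a ` {..n})"

definition barycentre :: "nat \<Rightarrow> (nat \<Rightarrow> 'a::real_normed_vector) \<Rightarrow> 'a" where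
  "barycentre n a = (1 / real (n + 1)) *\<^sub>R (\<Sum>k\<le>n. a k)"

definition relint :: "'a::real_normed_vector set \<Rightarrow> 'a set" where
  "relint S = {x \<in> S. \<exists>r>0. ball x r \<inter> affine hull S \<subseteq> S}"

end

(* In the affine coordinates x = a n + (SUM i<n. mu i *R (a i - a n)) the simplex is
   {mu. mu >= 0, sum mu <= 1} and the barycentre has all coordinates 1/(n+1).
   Affine independence together with compactness of the l1 unit sphere of R^n yields
   c > 0 with c * (SUM i<n. |mu i|) <= norm (SUM i<n. mu i *R (a i - a n)).  So a point
   of the affine hull within distance c/(n+1) of the barycentre has coordinates within
   l1-distance 1/(n+1) of (1/(n+1), ..., 1/(n+1)), and these are still nonnegative with
   sum at most 1. *)

theory Submission
  imports Defs
begin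

(* Coordinates from m on are pinned to 0: only then is the set compact in the product
   topology of nat => real. *)
lemma compact_l1_unit_sphere:
  "compact {\<mu> :: nat \<Rightarrow> real. (\<forall>i\<ge>m. \<mu> i = 0) \<and> (\<Sum>i<m. \<bar>\<mu> i\<bar>) = 1}"
proof -
  define B :: "(nat \<Rightarrow> real) set" where
    "B = PiE UNIV (\<lambda>i. if i < m then {-1..1} else {0})"
  have "compactin (product_topology (\<lambda>_. euclidean) UNIV) B"
    unfolding B_def compactin_PiE by auto
  then have "compact B"
    by (simp add: euclidean_product_topology)
  moreover have "closed {\<mu> :: nat \<Rightarrow> real. (\<Sum>i<m. \<bar>\<mu> i\<bar>) = 1}"
    by (intro closed_Collect_eq continuous_intros) auto
  moreover have "{\<mu>. (\<forall>i\<ge>m. \<mu> i = 0) \<and> (\<Sum>i<m. \<bar>\<mu> i\<bar>) = 1} = B \<inter> {\<mu>. (\<Sum>i<m. \<bar>\<mu> i\<bar>) = 1}"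
  proof (intro set_eqI iffI)
    fix \<mu> :: "nat \<Rightarrow> real" assume \<mu>: "\<mu> \<in> {\<mu>. (\<forall>i\<ge>m. \<mu> i = 0) \<and> (\<Sum>i<m. \<bar>\<mu> i\<bar>) = 1}"
    have "\<bar>\<mu> i\<bar> \<le> 1" if "i < m" for i
      using \<mu> that member_le_sum[of i "{..<m}" "\<lambda>i. \<bar>\<mu> i\<bar>"] by auto
    with \<mu> show "\<mu> \<in> B \<inter> {\<mu>. (\<Sum>i<m. \<bar>\<mu> i\<bar>) = 1}"
      by (auto simp: B_def PiE_iff abs_le_iff)
  next
    fix \<mu> :: "nat \<Rightarrow> real" assume \<mu>: "\<mu> \<in> B \<inter> {\<mu>. (\<Sum>i<m. \<bar>\<mu> i\<bar>) = 1}"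
    have "\<mu> i = 0" if "m \<le> i" for i
      using \<mu> that PiE_mem[of \<mu> UNIV "\<lambda>i. if i < m then {-1..1} else {0}" i]
      by (simp add: B_def)
    with \<mu> show "\<mu> \<in> {\<mu>. (\<forall>i\<ge>m. \<mu> i = 0) \<and> (\<Sum>i<m. \<bar>\<mu> i\<bar>) = 1}"
      by simp
  qed
  ultimately show ?thesis
    by (simp add: compact_Int_closed)
qed

lemma subspace_range_lincomb:
  fixes v :: "'i \<Rightarrow> 'a::real_vector"
  shows "subspace (range (\<lambda>\<mu>. \<Sum>i\<in>I. \<mu> i *\<^sub>R v i))"
  unfolding subspace_def
proof (intro conjI ballI allI)
  show "0 \<in> range (\<lambda>\<mu>. \<Sum>i\<in>I. \<mu> i *\<^sub>R v i)"
    by (rule range_eqI[of _ _ "\<lambda>_. 0"]) simp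
next
  fix x y assume "x \<in> range (\<lambda>\<mu>. \<Sum>i\<in>I. \<mu> i *\<^sub>R v i)" "y \<in> range (\<lambda>\<mu>. \<Sum>i\<in>I. \<mu> i *\<^sub>R v i)"
  then obtain \<mu> \<nu> where "x = (\<Sum>i\<in>I. \<mu> i *\<^sub>R v i)" "y = (\<Sum>i\<in>I. \<nu> i *\<^sub>R v i)" by blast
  then show "x + y \<in> range (\<lambda>\<mu>. \<Sum>i\<in>I. \<mu> i *\<^sub>R v i)"
    by (intro range_eqI[of _ _ "\<lambda>i. \<mu> i + \<nu> i"]) (simp add: scaleR_add_left sum.distrib)
next
  fix c :: real and x assume "x \<in> range (\<lambda>\<mu>. \<Sum>i\<in>I. \<mu> i *\<^sub>R v i)"
  then obtain \<mu> where "x = (\<Sum>i\<in>I. \<mu> i *\<^sub>R v i)" by blast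
  then show "c *\<^sub>R x \<in> range (\<lambda>\<mu>. \<Sum>i\<in>I. \<mu> i *\<^sub>R v i)"
    by (intro range_eqI[of _ _ "\<lambda>i. c * \<mu> i"]) (simp add: scaleR_sum_right)
qed

lemma barycentre_eq_coords:
  "barycentre n a = a n + (\<Sum>i<n. (1 / real (n + 1)) *\<^sub>R (a i - a n))"
proof -
  have "real (n + 1) *\<^sub>R (a n + (\<Sum>i<n. (1 / real (n + 1)) *\<^sub>R (a i - a n)))
      = real (n + 1) *\<^sub>R a n + (\<Sum>i<n. a i - a n)"
    by (simp add: scaleR_add_right scaleR_sum_right)
  also have "\<dots> = (\<Sum>k\<le>n. a k)"
  proof -
    have "(\<Sum>i<n. a i - a n) = (\<Sum>i<n. a i) - real n *\<^sub>R a n"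
      by (simp only: sum_subtractf sum_constant_scaleR card_lessThan)
    then show ?thesis
      by (simp add: lessThan_Suc_atMost[symmetric] scaleR_add_left)
  qed
  finally have eq: "real (n + 1) *\<^sub>R (a n + (\<Sum>i<n. (1 / real (n + 1)) *\<^sub>R (a i - a n))) = (\<Sum>k\<le>n. a k)" .
  show ?thesis
    unfolding barycentre_def eq[symmetric] by simp
qed

lemma lin_indep_c_norm_lower_bound:
  fixes v :: "nat \<Rightarrow> 'a::real_normed_vector"
  assumes "lin_indep_c m v"
  obtains c where "c > 0" "\<And>\<mu>. c * (\<Sum>i<m. \<bar>\<mu> i\<bar>) \<le> norm (\<Sum>i<m. \<mu> i *\<^sub>R v i)"
proof -
  define K where "K = {\<mu> :: nat \<Rightarrow> real. (\<forall>i\<ge>m. \<mu> i = 0) \<and> (\<Sum>i<m. \<bar>\<mu> i\<bar>) = 1}"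
  define N where "N \<mu> = norm (\<Sum>i<m. \<mu> i *\<^sub>R v i)" for \<mu>
  have "\<exists>c>0. \<forall>\<mu>\<in>K. c \<le> N \<mu>"
  proof (cases "K = {}")
    case False
    have "continuous_on K N"
      unfolding N_def
      by (intro continuous_intros continuous_on_subset[OF continuous_on_product_coordinates]) auto
    then obtain \<mu>\<^sub>0 where "\<mu>\<^sub>0 \<in> K" "\<forall>\<mu>\<in>K. N \<mu>\<^sub>0 \<le> N \<mu>"
      using continuous_attains_inf[OF compact_l1_unit_sphere[of m, folded K_def] False] by blast
    moreover have "N \<mu>\<^sub>0 > 0"
      using assms \<open>\<mu>\<^sub>0 \<in> K\<close> unfolding lin_indep_c_def K_def N_def by auto
    ultimately show ?thesis by blast
  qed (auto intro: exI[of _ 1])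
  then obtain c where "c > 0" and c: "\<And>\<mu>. \<mu> \<in> K \<Longrightarrow> c \<le> N \<mu>" by blast
  have "c * (\<Sum>i<m. \<bar>\<mu> i\<bar>) \<le> N \<mu>" for \<mu>
  proof (cases "(\<Sum>i<m. \<bar>\<mu> i\<bar>) = 0")
    case False
    define s where "s = (\<Sum>i<m. \<bar>\<mu> i\<bar>)"
    define \<nu> where "\<nu> i = (if i < m then \<mu> i / s else 0)" for i
    have "s > 0"
      using False unfolding s_def by (simp add: order_le_neq_trans sum_nonneg)
    have "\<nu> \<in> K"
      using \<open>s > 0\<close> by (simp add: K_def \<nu>_def abs_div sum_divide_distrib[symmetric] s_def)
    moreover have "N \<mu> = s * N \<nu>"
    proof -
      have "(\<Sum>i<m. \<mu> i *\<^sub>R v i) = s *\<^sub>R (\<Sum>i<m. \<nu> i *\<^sub>R v i)"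
        using \<open>s > 0\<close> by (simp add: \<nu>_def scaleR_sum_right)
      then show ?thesis
        using \<open>s > 0\<close> by (simp add: N_def)
    qed
    ultimately show ?thesis
      using c \<open>s > 0\<close> unfolding s_def by (simp add: mult.commute)
  qed (simp add: N_def)
  with \<open>c > 0\<close> show ?thesis
    unfolding N_def by (rule that)
qed

lemma affine_hull_subset_range_coords:
  fixes a :: "nat \<Rightarrow> 'a::real_vector"
  shows "affine hull (a ` {..n}) \<subseteq> range (\<lambda>\<mu>. a n + (\<Sum>i<n. \<mu> i *\<^sub>R (a i - a n)))"
proof (rule hull_minimal)
  show "a ` {..n} \<subseteq> range (\<lambda>\<mu>. a n + (\<Sum>i<n. \<mu> i *\<^sub>R (a i - a n)))"
  proof (rule image_subsetI)
    fix k assume "k \<in> {..n}"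
    then consider "k = n" | "k < n" by fastforce
    then show "a k \<in> range (\<lambda>\<mu>. a n + (\<Sum>i<n. \<mu> i *\<^sub>R (a i - a n)))"
    proof cases
      case 1
      then show ?thesis by (intro range_eqI[of _ _ "\<lambda>_. 0"]) simp
    next
      case 2
      then show ?thesis
        by (intro range_eqI[of _ _ "\<lambda>i. if i = k then 1 else 0"]) (simp add: if_distrib[of "\<lambda>r. r *\<^sub>R _"] cong: if_cong)
    qed
  qed
  have "affine ((+) (a n) ` range (\<lambda>\<mu>. \<Sum>i<n. \<mu> i *\<^sub>R (a i - a n)))"
    by (rule affine_translation[THEN iffD1, OF subspace_imp_affine[OF subspace_range_lincomb]])
  then show "affine (range (\<lambda>\<mu>. a n + (\<Sum>i<n. \<mu> i *\<^sub>R (a i - a n))))"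
    by (simp add: image_image)
qed

lemma simplex_c_coords_mem:
  fixes a :: "nat \<Rightarrow> 'a::real_normed_vector"
  assumes "\<And>i. i < n \<Longrightarrow> 0 \<le> \<mu> i" and "(\<Sum>i<n. \<mu> i) \<le> 1"
  shows "a n + (\<Sum>i<n. \<mu> i *\<^sub>R (a i - a n)) \<in> simplex_c n a"
proof -
  define w where "w k = (if k < n then \<mu> k else 1 - (\<Sum>i<n. \<mu> i))" for k
  have "(\<Sum>k\<le>n. w k *\<^sub>R a k) \<in> convex hull (a ` {..n})"
  proof (rule convex_sum)
    show "(\<Sum>k\<le>n. w k) = 1"
      by (simp add: w_def lessThan_Suc_atMost[symmetric])
    show "0 \<le> w k" if "k \<in> {..n}" for k
      using assms by (simp add: w_def)
  qed (auto intro: hull_inc)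
  moreover have "(\<Sum>k\<le>n. w k *\<^sub>R a k) = a n + (\<Sum>i<n. \<mu> i *\<^sub>R (a i - a n))"
    by (simp add: w_def lessThan_Suc_atMost[symmetric] scaleR_diff_right sum_subtractf
        scaleR_sum_left[symmetric] algebra_simps)
  ultimately show ?thesis
    by (simp add: simplex_c_def)
qed

lemma l1_near_uniform_weights:
  fixes \<mu> :: "nat \<Rightarrow> real"
  assumes "(\<Sum>i<n. \<bar>\<mu> i - 1 / real (n + 1)\<bar>) < 1 / real (n + 1)"
  shows "\<And>i. i < n \<Longrightarrow> 0 \<le> \<mu> i" and "(\<Sum>i<n. \<mu> i) \<le> 1"
proof -
  fix i assume "i < n"
  then have "\<bar>\<mu> i - 1 / real (n + 1)\<bar> \<le> (\<Sum>i<n. \<bar>\<mu> i - 1 / real (n + 1)\<bar>)"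
    by (intro member_le_sum) auto
  with assms show "0 \<le> \<mu> i" by linarith
next
  have "(\<Sum>i<n. \<mu> i) = (\<Sum>i<n. \<mu> i - 1 / real (n + 1)) + real n / real (n + 1)"
    by (simp add: sum_subtractf)
  also have "\<dots> \<le> (\<Sum>i<n. \<bar>\<mu> i - 1 / real (n + 1)\<bar>) + real n / real (n + 1)"
    by (intro add_right_mono sum_mono) auto
  also have "\<dots> \<le> 1 / real (n + 1) + real n / real (n + 1)"
    using assms by simp
  also have "\<dots> = 1"
    by (simp add: field_simps)
  finally show "(\<Sum>i<n. \<mu> i) \<le> 1" .
qed

theorem corollary23:
  fixes a :: "nat \<Rightarrow> 'a::real_normed_vector" and n :: nat
  assumes "aff_indep_c n a"
  shows "barycentre n a \<in> relint (simplex_c n a)"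
proof -
  define v where "v k = a k - a n" for k
  define u where "u = 1 / real (n + 1)"
  obtain c where "c > 0" and c: "\<And>\<mu>. c * (\<Sum>i<n. \<bar>\<mu> i\<bar>) \<le> norm (\<Sum>i<n. \<mu> i *\<^sub>R v i)"
    using lin_indep_c_norm_lower_bound assms unfolding aff_indep_c_def v_def by blast
  have b: "barycentre n a = a n + (\<Sum>i<n. u *\<^sub>R v i)"
    unfolding barycentre_eq_coords u_def v_def ..
  have "barycentre n a \<in> simplex_c n a"
    unfolding b v_def by (rule simplex_c_coords_mem) (auto simp: u_def field_simps)
  moreover have "ball (barycentre n a) (c * u) \<inter> affine hull (simplex_c n a) \<subseteq> simplex_c n a"
  proof
    fix y assume y: "y \<in> ball (barycentre n a) (c * u) \<inter> affine hull (simplex_c n a)"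
    then obtain \<mu> where y_eq: "y = a n + (\<Sum>i<n. \<mu> i *\<^sub>R v i)"
      using affine_hull_subset_range_coords[of a n] by (auto simp: simplex_c_def v_def)
    have "c * (\<Sum>i<n. \<bar>\<mu> i - u\<bar>) \<le> norm (y - barycentre n a)"
      using c[of "\<lambda>i. \<mu> i - u"] by (simp add: y_eq b sum_subtractf scaleR_diff_left)
    also have "\<dots> < c * u"
      using y by (simp add: dist_norm norm_minus_commute)
    finally have "(\<Sum>i<n. \<bar>\<mu> i - u\<bar>) < u"
      using \<open>c > 0\<close> by simp
    then show "y \<in> simplex_c n a"
      unfolding y_eq v_def u_def by (intro simplex_c_coords_mem l1_near_uniform_weights)
  qed
  moreover have "c * u > 0"
    using \<open>c > 0\<close> by (simp add: u_def)
  ultimately show ?thesis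
    unfolding relint_def by blast
qed

end
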